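(* Let $v_1\ge v_2\ge v_3\ge v_4>0$ and $p_{ij}=\frac{v_i}{v_i+v_j}$. For $i\in\{1,2,3,4\}$ and $j\in\{A,B,C\}$ let $T_{ij}$ be the probability that team $a_i$ wins the knockout tournament of type $j$. Then $T_{1A}\ge T_{1B}\ge T_{1C}$, $T_{2B}\ge T_{2A}\ge T_{2C}$, $T_{3C}\ge T_{3A}\ge T_{3B}$, and $T_{4C}\ge T_{4B}\ge T_{4A}$.
   Context: Four teams $a_1,\dots,a_4$ with weights $v_1,\dots,v_4$. In any game between $a_i$ and $a_j$, $a_i$ wins with probability $p_{ij}=v_i/(v_i+v_j)$, independently of other games. A knockout tournament consists of two first-round games whose winners meet in a final. Tournament $A$: first round $a_1$ vs $a_4$ and $a_2$ vs $a_3$. Tournament $B$: first round $a_1$ vs $a_3$ and $a_2$ vs $a_4$. Tournament $C$: first round $a_1$ vs $a_2$ and $a_3$ vs $a_4$. *)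

theory Defs
  imports Complex_Main
begin

definition p :: "(nat \<Rightarrow> real) \<Rightarrow> nat \<Rightarrow> nat \<Rightarrow> real" where
  "p v i j = v i / (v i + v j)"

text \<open>Knockout tournament with first-round games a vs b and c vs d, winners meet in the final.
  ko_win v a b c d = probability that team a wins the tournament (a plays b in round one;
  in the final a meets c with probability p c d, d with probability p d c).\<close>
definition ko_win :: "(nat \<Rightarrow> real) \<Rightarrow> nat \<Rightarrow> nat \<Rightarrow> nat \<Rightarrow> nat \<Rightarrow> real" where
  "ko_win v a b c d = p v a b * (p v c d * p v a c + p v d c * p v a d)"

text \<open>Tournament A: 1 vs 4, 2 vs 3. B: 1 vs 3, 2 vs 4. C: 1 vs 2, 3 vs 4.
  T_X v i = probability that team i wins tournament X.\<close>
definition TA :: "(nat \<Rightarrow> real) \<Rightarrow> nat \<Rightarrow> real" where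
  "TA v i = (if i = 1 then ko_win v 1 4 2 3 else if i = 4 then ko_win v 4 1 2 3
            else if i = 2 then ko_win v 2 3 1 4 else ko_win v 3 2 1 4)"
definition TB :: "(nat \<Rightarrow> real) \<Rightarrow> nat \<Rightarrow> real" where
  "TB v i = (if i = 1 then ko_win v 1 3 2 4 else if i = 3 then ko_win v 3 1 2 4
            else if i = 2 then ko_win v 2 4 1 3 else ko_win v 4 2 1 3)"
definition TC :: "(nat \<Rightarrow> real) \<Rightarrow> nat \<Rightarrow> real" where
  "TC v i = (if i = 1 then ko_win v 1 2 3 4 else if i = 2 then ko_win v 2 1 3 4
            else if i = 3 then ko_win v 3 4 1 2 else ko_win v 4 3 1 2)"

end

theory Submission
  imports Defs
begin

text \<open>If team \<open>a\<close> meets \<open>b\<close> in the first round while \<open>c\<close> plays \<open>d\<close>, swapping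
  \<open>b\<close> and \<open>c\<close> changes the probability that \<open>a\<close> wins by a positive multiple of
  \<open>v b - v c\<close>: every team prefers to meet the weaker of two opponents first. In each of
  the eight inequalities the two tournaments differ, for the team in question, by exactly such
  a swap (up to the order of the other first-round pair).\<close>

lemma ko_win_final_commute: "ko_win v a b c d = ko_win v a b d c"
  by (simp add: ko_win_def add.commute)

lemma ko_win_exchange_diff:
  assumes "0 < v a" "0 < v b" "0 < v c" "0 < v d"
  shows "ko_win v a c b d - ko_win v a b c d =
    2 * (v a * v d)\<^sup>2 * (v b - v c) /
      ((v a + v b) * (v a + v c) * (v a + v d) * (v b + v d) * (v c + v d))"
proof -
  have "v a + v b \<noteq> 0" "v a + v c \<noteq> 0" "v a + v d \<noteq> 0" "v b + v d \<noteq> 0" "v c + v d \<noteq> 0"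
    using assms by linarith+
  then show ?thesis
    unfolding ko_win_def p_def
    by (simp add: divide_simps add.commute) (simp add: algebra_simps power2_eq_square)
qed

lemma ko_win_weaker_first_opponent:
  assumes "0 < v a" "0 < v b" "0 < v c" "0 < v d" and "v c \<le> v b"
  shows "ko_win v a b c d \<le> ko_win v a c b d"
proof -
  have "0 \<le> 2 * (v a * v d)\<^sup>2 * (v b - v c) /
      ((v a + v b) * (v a + v c) * (v a + v d) * (v b + v d) * (v c + v d))"
    using assms by (intro divide_nonneg_pos mult_nonneg_nonneg mult_pos_pos) auto
  then show ?thesis
    using ko_win_exchange_diff[OF assms(1-4)] by linarith
qed

theorem lemma1:
  fixes v :: "nat \<Rightarrow> real"
  assumes "v 1 \<ge> v 2" and "v 2 \<ge> v 3" and "v 3 \<ge> v 4" and "v 4 > 0"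
  shows "TA v 1 \<ge> TB v 1 \<and> TB v 1 \<ge> TC v 1 \<and>
         TB v 2 \<ge> TA v 2 \<and> TA v 2 \<ge> TC v 2 \<and>
         TC v 3 \<ge> TA v 3 \<and> TA v 3 \<ge> TB v 3 \<and>
         TC v 4 \<ge> TB v 4 \<and> TB v 4 \<ge> TA v 4"
proof -
  have pos: "0 < v i" if "i \<in> {1, 2, 3, 4}" for i
    using that assms by auto
  have weaker_first: "ko_win v a b c d \<le> ko_win v a c b d"
    if "{a, b, c, d} \<subseteq> {1, 2, 3, 4}" and "v c \<le> v b" for a b c d
    using that by (intro ko_win_weaker_first_opponent pos) auto
  have "ko_win v 1 2 3 4 \<le> ko_win v 1 3 2 4" "ko_win v 1 3 4 2 \<le> ko_win v 1 4 3 2"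
    "ko_win v 2 1 3 4 \<le> ko_win v 2 3 1 4" "ko_win v 2 3 4 1 \<le> ko_win v 2 4 3 1"
    "ko_win v 3 1 2 4 \<le> ko_win v 3 2 1 4" "ko_win v 3 2 4 1 \<le> ko_win v 3 4 2 1"
    "ko_win v 4 1 2 3 \<le> ko_win v 4 2 1 3" "ko_win v 4 2 3 1 \<le> ko_win v 4 3 2 1"
    using assms by (auto intro!: weaker_first)
  then show ?thesis
    by (simp add: TA_def TB_def TC_def ko_win_final_commute)
qed

end
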